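(* Let $\mathsf{k}$ be a field, $R=\mathsf{k}[x,y]$, $S=R[t]$, $A=\mathsf{k}[t]/(t^3)$, $F_B=X-Y$, $G_1=Y^{[2]}-X^{[2]}$, $G_2=X^{[2]}Y-XY^{[2]}$ and $F=T^{[2]}F_B+TG_1+G_2\in Q_S$. Then $\operatorname{Ann}_R(G_1)\subseteq\operatorname{Ann}_R(F_B)$, so the ideals $I_i$ (defined below) satisfy $I_1=I_2=R$ and the condition $I_1\circ G_1\subseteq R\circ F_B$ fails; nevertheless $C=S/\operatorname{Ann}_S(F)$ is a free extension with base $A$ and fiber $B=R/\operatorname{Ann}_R(F_B)=R/(x+y,xy)$ (via $\iota,\pi$).
   Context: $Q_R=\mathsf{k}_{DP}[X,Y]$, $Q_S=\mathsf{k}_{DP}[X,Y,T]$ divided power rings with contraction action ($x^s\circ X^{[k]}=X^{[k-s]}$ for $k\ge s$, else $0$, similarly for $y,t$). $I_0=\operatorname{Ann}_R(F_B)$, $I_i=(I_{i-1}:\operatorname{Ann}_R(G_i))$ with $(I:J)=\{f:fJ\subseteq I\}$. $\iota:A\to C$ is induced by $\mathsf{k}[t]\subset S$, $\pi:C\to B$ by $t\mapsto 0$. $C$ is a free extension with base $A$ and fiber $B$ if $\iota$ makes $C$ a free $A$-module and $\pi$ is surjective with $\ker\pi=(\iota(A_+))C$. *)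

theory Defs
  imports "HOL-Library.Poly_Mapping" "HOL-Library.Product_Plus"
          "HOL-Computational_Algebra.Polynomial"
begin

text \<open>Polynomial rings as finitely supported functions from exponent vectors to coefficients.
  R = k[x,y]: monomial x^a y^b is the key (a,b).
  S = k[x,y,t]: monomial x^a y^b t^c is the key (a,b,c).
  The multiplication is the convolution product of Poly_Mapping.
  Divided power rings Q_R, Q_S are represented by the same types of finitely supported
  functions: key (i,j) stands for X^[i] Y^[j], key (i,j,k) for X^[i] Y^[j] T^[k].\<close>

type_synonym 'k polR = "(nat \<times> nat) \<Rightarrow>\<^sub>0 'k"
type_synonym 'k polS = "(nat \<times> nat \<times> nat) \<Rightarrow>\<^sub>0 'k"
type_synonym 'k dpR = "(nat \<times> nat) \<Rightarrow>\<^sub>0 'k"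
type_synonym 'k dpS = "(nat \<times> nat \<times> nat) \<Rightarrow>\<^sub>0 'k"

definition contractR :: "'k::comm_ring_1 polR \<Rightarrow> 'k dpR \<Rightarrow> 'k dpR" where
  "contractR f G =
     (\<Sum>m\<in>Poly_Mapping.keys f. \<Sum>n\<in>Poly_Mapping.keys G.
        if fst m \<le> fst n \<and> snd m \<le> snd n
        then Poly_Mapping.single (fst n - fst m, snd n - snd m) (Poly_Mapping.lookup f m * Poly_Mapping.lookup G n)
        else 0)"

definition contractS :: "'k::comm_ring_1 polS \<Rightarrow> 'k dpS \<Rightarrow> 'k dpS" where
  "contractS f G =
     (\<Sum>m\<in>Poly_Mapping.keys f. \<Sum>n\<in>Poly_Mapping.keys G.
        case m of (a,b,c) \<Rightarrow> case n of (i,j,k) \<Rightarrow>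
        if a \<le> i \<and> b \<le> j \<and> c \<le> k
        then Poly_Mapping.single (i - a, j - b, k - c) (Poly_Mapping.lookup f m * Poly_Mapping.lookup G n)
        else 0)"

definition AnnR :: "'k::comm_ring_1 dpR \<Rightarrow> 'k polR set" where
  "AnnR G = {f. contractR f G = 0}"

definition AnnS :: "'k::comm_ring_1 dpS \<Rightarrow> 'k polS set" where
  "AnnS G = {f. contractS f G = 0}"

definition colon :: "'a::comm_ring_1 set \<Rightarrow> 'a set \<Rightarrow> 'a set" where
  "colon I J = {f. \<forall>g\<in>J. f * g \<in> I}"

definition varx :: "'k::comm_ring_1 polR" where "varx = Poly_Mapping.single (1,0) 1"
definition vary :: "'k::comm_ring_1 polR" where "vary = Poly_Mapping.single (0,1) 1"

definition ideal2 :: "'a::comm_ring_1 \<Rightarrow> 'a \<Rightarrow> 'a set" where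
  "ideal2 p q = {a * p + b * q | a b. True}"

definition FB :: "'k::comm_ring_1 dpR" where
  "FB = Poly_Mapping.single (1,0) 1 - Poly_Mapping.single (0,1) 1"
definition G1 :: "'k::comm_ring_1 dpR" where
  "G1 = Poly_Mapping.single (0,2) 1 - Poly_Mapping.single (2,0) 1"
definition G2 :: "'k::comm_ring_1 dpR" where
  "G2 = Poly_Mapping.single (2,1) 1 - Poly_Mapping.single (1,2) 1"

definition timesTdp :: "nat \<Rightarrow> 'k::comm_ring_1 dpR \<Rightarrow> 'k dpS" where
  "timesTdp c G = (\<Sum>n\<in>Poly_Mapping.keys G. Poly_Mapping.single (fst n, snd n, c) (Poly_Mapping.lookup G n))"

definition Fbig :: "'k::comm_ring_1 dpS" where
  "Fbig = timesTdp 2 FB + timesTdp 1 G1 + timesTdp 0 G2"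

definition I0 :: "'k::comm_ring_1 polR set" where "I0 = AnnR FB"
definition I1 :: "'k::comm_ring_1 polR set" where "I1 = colon I0 (AnnR G1)"
definition I2 :: "'k::comm_ring_1 polR set" where "I2 = colon I1 (AnnR G2)"

definition tpoly :: "'k::comm_ring_1 poly \<Rightarrow> 'k polS" where
  "tpoly p = (\<Sum>i\<le>degree p. Poly_Mapping.single (0,0,i) (coeff p i))"

definition tzero :: "'k::comm_ring_1 polS \<Rightarrow> 'k polR" where
  "tzero s = (\<Sum>m\<in>Poly_Mapping.keys s. case m of (a,b,c) \<Rightarrow>
                 if c = 0 then Poly_Mapping.single (a,b) (Poly_Mapping.lookup s m) else 0)"

text \<open>C = S/J is a free module over A = k[t]/(t^3) (A acting via \<iota>), written out on
  representatives: there is a family E of elements of S whose classes form an A-basis of C.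
  Coefficients are polynomials in t, and a coefficient is zero in A iff t^3 divides it.\<close>
definition free_over_A :: "'k::field polS set \<Rightarrow> bool" where
  "free_over_A J \<longleftrightarrow> (\<exists>E::'k polS set.
     (\<forall>s. \<exists>c::'k polS \<Rightarrow> 'k poly. finite {e\<in>E. c e \<noteq> 0} \<and>
            s - (\<Sum>e\<in>{e\<in>E. c e \<noteq> 0}. tpoly (c e) * e) \<in> J) \<and>
     (\<forall>c::'k polS \<Rightarrow> 'k poly. finite {e\<in>E. c e \<noteq> 0} \<longrightarrow>
            (\<Sum>e\<in>{e\<in>E. c e \<noteq> 0}. tpoly (c e) * e) \<in> J \<longrightarrow>
            (\<forall>e\<in>E. [:0,0,0,1:] dvd c e)))"

text \<open>Free extension C = S/J with base A = k[t]/(t^3) and fiber B = R/K, via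
  \<iota> : A \<rightarrow> C induced by k[t] \<subseteq> S and \<pi> : C \<rightarrow> B induced by t \<mapsto> 0:
  \<iota> and \<pi> are well defined, C is a free A-module, \<pi> is surjective and
  ker \<pi> = \<iota>(A_+) C (A_+ = (t)/(t^3), so \<iota>(A_+)C is the image of the ideal t S).\<close>
definition free_extension :: "'k::field polS set \<Rightarrow> 'k polR set \<Rightarrow> bool" where
  "free_extension J K \<longleftrightarrow>
     (\<forall>p. [:0,0,0,1:] dvd p \<longrightarrow> tpoly p \<in> J) \<and>
     (\<forall>s\<in>J. tzero s \<in> K) \<and>
     free_over_A J \<and>
     (\<forall>r. \<exists>s. r - tzero s \<in> K) \<and>
     (\<forall>s. tzero s \<in> K \<longleftrightarrow> (\<exists>u. s - tpoly [:0,1:] * u \<in> J))"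

end

theory Submission
  imports Defs
begin

text \<open>Contraction by s only sees the coefficients of s at monomials dividing a monomial of the
  dual generator, so every annihilator below is cut out by finitely many linear conditions on
  low-degree coefficients. For \<open>F\<^sub>B = X - Y\<close> these are \<open>c\<^sub>0\<^sub>0 = 0\<close> and \<open>c\<^sub>1\<^sub>0 = c\<^sub>0\<^sub>1\<close>, which
  describe \<open>(x + y, xy)\<close>. Contracting against \<open>G\<^sub>1\<close> kills the whole linear part, so
  \<open>Ann(G\<^sub>1) \<subseteq> Ann(F\<^sub>B)\<close> and \<open>I\<^sub>1 = I\<^sub>2 = R\<close>; yet \<open>1 \<circ> G\<^sub>1 = G\<^sub>1\<close> has degree 2 and is no contraction
  of the linear form \<open>F\<^sub>B\<close>. For \<open>F\<close> six conditions describe \<open>Ann\<^sub>S(F)\<close>. Solving them, every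
  \<open>s \<in> S\<close> is congruent to \<open>p(t) + q(t) x\<close> with \<open>p, q\<close> unique modulo \<open>t\<^sup>3\<close>, so \<open>1, x\<close> is an
  \<open>A\<close>-basis of \<open>C\<close>; and at \<open>t = 0\<close> the conditions reduce to those of \<open>Ann\<^sub>R(F\<^sub>B)\<close>, which yields
  the fiber.\<close>

abbreviation coef :: "('a \<Rightarrow>\<^sub>0 'b::zero) \<Rightarrow> 'a \<Rightarrow> 'b"
  where "coef \<equiv> Poly_Mapping.lookup"

lemma lookup_contractR:
  fixes f :: "'k::comm_ring_1 polR" and G :: "'k dpR"
  shows "coef (contractR f G) (q1, q2) =
     (\<Sum>n\<in>Poly_Mapping.keys G. if q1 \<le> fst n \<and> q2 \<le> snd n
        then coef f (fst n - q1, snd n - q2) * coef G n else 0)"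
proof -
  have summand: "coef (if fst m \<le> fst n \<and> snd m \<le> snd n
        then Poly_Mapping.single (fst n - fst m, snd n - snd m) (coef f m * coef G n) else 0) (q1, q2)
      = (if m = (fst n - q1, snd n - q2) \<and> q1 \<le> fst n \<and> q2 \<le> snd n
         then coef f m * coef G n else 0)" for m n :: "nat \<times> nat"
    by (cases m; cases n) (auto simp: lookup_single when_def)
  show ?thesis
    unfolding contractR_def lookup_sum summand
    by (subst sum.swap) (auto intro!: sum.cong simp: sum.delta_remove in_keys_iff)
qed

lemma lookup_contractS:
  fixes f :: "'k::comm_ring_1 polS" and G :: "'k dpS"
  shows "coef (contractS f G) (q1, q2, q3) =
     (\<Sum>n\<in>Poly_Mapping.keys G. if q1 \<le> fst n \<and> q2 \<le> fst (snd n) \<and> q3 \<le> snd (snd n)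
        then coef f (fst n - q1, fst (snd n) - q2, snd (snd n) - q3) * coef G n else 0)"
proof -
  have summand: "coef (case m of (a, b, c) \<Rightarrow> case n of (i, j, k) \<Rightarrow>
        if a \<le> i \<and> b \<le> j \<and> c \<le> k
        then Poly_Mapping.single (i - a, j - b, k - c) (coef f m * coef G n) else 0) (q1, q2, q3)
      = (if m = (fst n - q1, fst (snd n) - q2, snd (snd n) - q3)
            \<and> q1 \<le> fst n \<and> q2 \<le> fst (snd n) \<and> q3 \<le> snd (snd n)
         then coef f m * coef G n else 0)" for m n :: "nat \<times> nat \<times> nat"
    by (cases m; cases n) (auto simp: lookup_single when_def)
  show ?thesis
    unfolding contractS_def lookup_sum summand
    by (subst sum.swap) (auto intro!: sum.cong simp: sum.delta_remove in_keys_iff)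
qed

lemma contractR_one: "contractR 1 G = (G :: 'k::comm_ring_1 dpR)"
proof (rule poly_mapping_eqI)
  fix q :: "nat \<times> nat"
  have "coef (contractR 1 G) q =
      (\<Sum>n\<in>Poly_Mapping.keys G. if n = q then coef G n else 0)"
    unfolding lookup_contractR[of _ _ "fst q" "snd q", simplified]
    by (rule sum.cong) (auto simp: lookup_one zero_prod_def prod_eq_iff)
  then show "coef (contractR 1 G) q = coef G q"
    by (simp add: in_keys_iff)
qed

lemma lookup_contractR_supported:
  fixes f :: "'k::comm_ring_1 polR" and G :: "'k dpR"
  assumes "finite P" and "\<And>n. n \<notin> P \<Longrightarrow> coef G n = 0"
  shows "coef (contractR f G) (q1, q2) =
     (\<Sum>n\<in>P. if q1 \<le> fst n \<and> q2 \<le> snd n then coef f (fst n - q1, snd n - q2) * coef G n else 0)"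
  unfolding lookup_contractR using assms
  by (intro sum.mono_neutral_left) (auto simp: in_keys_iff)

lemma lookup_contractS_supported:
  fixes f :: "'k::comm_ring_1 polS" and G :: "'k dpS"
  assumes "finite P" and "\<And>n. n \<notin> P \<Longrightarrow> coef G n = 0"
  shows "coef (contractS f G) (q1, q2, q3) =
     (\<Sum>n\<in>P. if q1 \<le> fst n \<and> q2 \<le> fst (snd n) \<and> q3 \<le> snd (snd n)
        then coef f (fst n - q1, fst (snd n) - q2, snd (snd n) - q3) * coef G n else 0)"
  unfolding lookup_contractS using assms
  by (intro sum.mono_neutral_left) (auto simp: in_keys_iff)

lemma lookup_timesTdp:
  "coef (timesTdp c G) (i, j, k) = (if k = c then coef G (i, j) else 0)"
proof -
  have "coef (timesTdp c G) (i, j, k) =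
      (\<Sum>n\<in>Poly_Mapping.keys G. if n = (i, j) then (if k = c then coef G n else 0) else 0)"
    unfolding timesTdp_def lookup_sum by (rule sum.cong) (auto simp: lookup_single when_def)
  then show ?thesis by (simp add: in_keys_iff)
qed

lemma lookup_FB:
  "coef (FB :: 'k::comm_ring_1 dpR) n = (if n = (1,0) then 1 else if n = (0,1) then -1 else 0)"
  unfolding FB_def lookup_minus lookup_single when_def by auto

lemma lookup_G1:
  "coef (G1 :: 'k::comm_ring_1 dpR) n = (if n = (0,2) then 1 else if n = (2,0) then -1 else 0)"
  unfolding G1_def lookup_minus lookup_single when_def by auto

lemma lookup_G2:
  "coef (G2 :: 'k::comm_ring_1 dpR) n = (if n = (2,1) then 1 else if n = (1,2) then -1 else 0)"
  unfolding G2_def lookup_minus lookup_single when_def by auto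

lemma lookup_Fbig:
  "coef (Fbig :: 'k::comm_ring_1 dpS) n =
     (if n = (1,0,2) then 1 else if n = (0,1,2) then -1
      else if n = (0,2,1) then 1 else if n = (2,0,1) then -1
      else if n = (2,1,0) then 1 else if n = (1,2,0) then -1 else 0)"
  by (cases n) (auto simp: Fbig_def lookup_add lookup_timesTdp lookup_FB lookup_G1 lookup_G2)

lemma lookup_contractR_FB:
  "coef (contractR f (FB :: 'k::comm_ring_1 dpR)) (q1, q2) =
     (if q1 \<le> 1 \<and> q2 = 0 then coef f (1 - q1, 0) else 0)
   - (if q1 = 0 \<and> q2 \<le> 1 then coef f (0, 1 - q2) else 0)"
  by (subst lookup_contractR_supported[of "{(1,0), (0,1)}"]) (auto simp: lookup_FB)

lemma lookup_contractR_G1: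
  "coef (contractR f (G1 :: 'k::comm_ring_1 dpR)) (q1, q2) =
     (if q1 = 0 \<and> q2 \<le> 2 then coef f (0, 2 - q2) else 0)
   - (if q1 \<le> 2 \<and> q2 = 0 then coef f (2 - q1, 0) else 0)"
  by (subst lookup_contractR_supported[of "{(0,2), (2,0)}"]) (auto simp: lookup_G1)

lemma lookup_contractS_Fbig:
  "coef (contractS s (Fbig :: 'k::comm_ring_1 dpS)) (q1, q2, q3) =
     (if q1 \<le> 1 \<and> q2 = 0 \<and> q3 \<le> 2 then coef s (1 - q1, 0, 2 - q3) else 0)
   - (if q1 = 0 \<and> q2 \<le> 1 \<and> q3 \<le> 2 then coef s (0, 1 - q2, 2 - q3) else 0)
   + (if q1 = 0 \<and> q2 \<le> 2 \<and> q3 \<le> 1 then coef s (0, 2 - q2, 1 - q3) else 0)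
   - (if q1 \<le> 2 \<and> q2 = 0 \<and> q3 \<le> 1 then coef s (2 - q1, 0, 1 - q3) else 0)
   + (if q1 \<le> 2 \<and> q2 \<le> 1 \<and> q3 = 0 then coef s (2 - q1, 1 - q2, 0) else 0)
   - (if q1 \<le> 1 \<and> q2 \<le> 2 \<and> q3 = 0 then coef s (1 - q1, 2 - q2, 0) else 0)"
  by (subst lookup_contractS_supported[of "{(1,0,2), (0,1,2), (0,2,1), (2,0,1), (2,1,0), (1,2,0)}"])
    (auto simp: lookup_Fbig)

lemma AnnR_FB_iff:
  "f \<in> AnnR (FB :: 'k::comm_ring_1 dpR) \<longleftrightarrow> coef f (0,0) = 0 \<and> coef f (1,0) = coef f (0,1)"
proof
  assume "f \<in> AnnR FB"
  then have "\<And>q. coef (contractR f (FB :: 'k dpR)) q = 0" by (simp add: AnnR_def)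
  from this[of "(0,0)"] this[of "(1,0)"] show "coef f (0,0) = 0 \<and> coef f (1,0) = coef f (0,1)"
    by (simp_all add: lookup_contractR_FB)
next
  assume "coef f (0,0) = 0 \<and> coef f (1,0) = coef f (0,1)"
  then have "coef (contractR f (FB :: 'k dpR)) (q1, q2) = 0" for q1 q2
    by (auto simp: lookup_contractR_FB le_Suc_eq)
  then show "f \<in> AnnR FB" by (auto simp: AnnR_def intro!: poly_mapping_eqI)
qed

lemma AnnR_G1_subset_AnnR_FB: "AnnR (G1 :: 'k::comm_ring_1 dpR) \<subseteq> AnnR FB"
proof
  fix f :: "'k polR"
  assume "f \<in> AnnR G1"
  then have "\<And>q. coef (contractR f (G1 :: 'k dpR)) q = 0" by (simp add: AnnR_def)
  from this[of "(0,2)"] this[of "(1,0)"] this[of "(0,1)"]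
  show "f \<in> AnnR FB" by (simp add: lookup_contractR_G1 AnnR_FB_iff)
qed

lemma AnnS_Fbig_iff:
  "s \<in> AnnS (Fbig :: 'k::comm_ring_1 dpS) \<longleftrightarrow>
     coef s (0,0,0) = 0 \<and> coef s (1,0,0) = coef s (0,0,1) \<and> coef s (0,1,0) = coef s (0,0,1)
   \<and> coef s (0,0,2) - coef s (1,0,1) + coef s (1,1,0) - coef s (0,2,0) = 0
   \<and> coef s (2,0,0) - coef s (0,0,2) + coef s (0,1,1) - coef s (1,1,0) = 0
   \<and> coef s (1,0,2) - coef s (0,1,2) + coef s (0,2,1) - coef s (2,0,1)
       + coef s (2,1,0) - coef s (1,2,0) = 0"
  (is "_ \<longleftrightarrow> ?conditions")
proof
  assume "s \<in> AnnS Fbig"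
  then have "\<And>q. coef (contractS s (Fbig :: 'k dpS)) q = 0" by (simp add: AnnS_def)
  from this[of "(0,0,0)"] this[of "(1,0,0)"] this[of "(0,1,0)"] this[of "(0,0,1)"]
    this[of "(2,0,0)"] this[of "(0,2,0)"] this[of "(0,0,2)"] this[of "(1,1,0)"]
    this[of "(1,0,1)"] this[of "(0,1,1)"] this[of "(1,0,2)"]
  show ?conditions by (simp add: lookup_contractS_Fbig algebra_simps)
next
  assume ?conditions
  then have "coef (contractS s (Fbig :: 'k dpS)) (q1, q2, q3) = 0" for q1 q2 q3
    by (auto simp: lookup_contractS_Fbig le_Suc_eq numeral_2_eq_2 algebra_simps)
  then show "s \<in> AnnS Fbig" by (auto simp: AnnS_def intro!: poly_mapping_eqI)
qed

lemma lookup_mult_single: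
  "coef (a * Poly_Mapping.single k c) n = (\<Sum>l. coef a l * c when n = l + k)"
  for k :: "'a::cancel_comm_monoid_add" and c :: "'b::comm_semiring_1"
proof -
  have "((c when k = q) when n = l + q) = ((c when n = l + k) when k = q)" for q l
    by (auto simp: when_def)
  then have "(\<Sum>q. ((c when k = q) when n = l + q)) = (c when n = l + k)" for l
    by (simp only: Sum_any_when_equal')
  then show ?thesis by (simp add: lookup_mult lookup_single mult_when)
qed

lemma lookup_mult_single_shift:
  "coef (a * Poly_Mapping.single k c) (n + k) = coef a n * c"
  for k :: "'a::cancel_comm_monoid_add" and c :: "'b::comm_semiring_1"
  unfolding lookup_mult_single by simp

lemma lookup_mult_single_pair:
  "coef (a * Poly_Mapping.single (k1, k2) c) (n1, n2) =
     (if k1 \<le> n1 \<and> k2 \<le> n2 then coef a (n1 - k1, n2 - k2) * c else 0)"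
  for k1 k2 n1 n2 :: nat and c :: "'b::comm_semiring_1"
proof (cases "k1 \<le> n1 \<and> k2 \<le> n2")
  case True
  then have "(n1, n2) = (n1 - k1, n2 - k2) + (k1, k2)" by simp
  with True show ?thesis by (metis lookup_mult_single_shift)
next
  case False
  then have "(n1, n2) \<noteq> l + (k1, k2)" for l by (auto simp: prod_eq_iff)
  then have "coef (a * Poly_Mapping.single (k1, k2) c) (n1, n2) = 0"
    unfolding lookup_mult_single by simp
  with False show ?thesis by auto
qed

lemma lookup_mult_single_triple:
  "coef (a * Poly_Mapping.single (k1, k2, k3) c) (n1, n2, n3) =
     (if k1 \<le> n1 \<and> k2 \<le> n2 \<and> k3 \<le> n3 then coef a (n1 - k1, n2 - k2, n3 - k3) * c else 0)"
  for k1 k2 k3 n1 n2 n3 :: nat and c :: "'b::comm_semiring_1"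
proof (cases "k1 \<le> n1 \<and> k2 \<le> n2 \<and> k3 \<le> n3")
  case True
  then have "(n1, n2, n3) = (n1 - k1, n2 - k2, n3 - k3) + (k1, k2, k3)" by simp
  with True show ?thesis by (metis lookup_mult_single_shift)
next
  case False
  then have "(n1, n2, n3) \<noteq> l + (k1, k2, k3)" for l by (auto simp: prod_eq_iff)
  then have "coef (a * Poly_Mapping.single (k1, k2, k3) c) (n1, n2, n3) = 0"
    unfolding lookup_mult_single by simp
  with False show ?thesis by auto
qed

lemma ideal2_add:
  assumes "u \<in> ideal2 p q" and "v \<in> ideal2 p q"
  shows "u + v \<in> ideal2 p q"
proof -
  obtain a b c d where "u = a * p + b * q" and "v = c * p + d * q"
    using assms by (auto simp: ideal2_def)
  then have "u + v = (a + c) * p + (b + d) * q" by (simp add: algebra_simps)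
  then show ?thesis unfolding ideal2_def by blast
qed

lemma ideal2_mult_left:
  assumes "u \<in> ideal2 p q"
  shows "r * u \<in> ideal2 p q"
proof -
  obtain a b where "u = a * p + b * q" using assms by (auto simp: ideal2_def)
  then have "r * u = (r * a) * p + (r * b) * q" by (simp add: algebra_simps)
  then show ?thesis unfolding ideal2_def by blast
qed

lemma ideal2_zero: "0 \<in> ideal2 p q"
  unfolding ideal2_def by (rule CollectI, rule exI[of _ 0], rule exI[of _ 0]) simp

lemma ideal2_sum: "(\<And>i. i \<in> A \<Longrightarrow> g i \<in> ideal2 p q) \<Longrightarrow> sum g A \<in> ideal2 p q"
  by (induction A rule: infinite_finite_induct) (auto intro: ideal2_add ideal2_zero)

lemma ideal2_left: "p \<in> ideal2 p q"
  unfolding ideal2_def by (rule CollectI, rule exI[of _ 1], rule exI[of _ 0]) simp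

lemma ideal2_right: "q \<in> ideal2 p q"
  unfolding ideal2_def by (rule CollectI, rule exI[of _ 0], rule exI[of _ 1]) simp

lemma varx_times_vary: "varx * vary = (Poly_Mapping.single (1,1) 1 :: 'k::comm_ring_1 polR)"
  by (simp add: varx_def vary_def mult_single)

lemma single_in_ideal2_varx_vary:
  assumes "i + j \<ge> 2"
  shows "Poly_Mapping.single (i, j) v \<in> ideal2 (varx + vary) (varx * vary :: 'k::comm_ring_1 polR)"
proof -
  consider "i \<ge> 1" "j \<ge> 1" | "j = 0" "i \<ge> 2" | "i = 0" "j \<ge> 2" using assms by linarith
  then show ?thesis
  proof cases
    case 1
    then have "Poly_Mapping.single (i, j) v = Poly_Mapping.single (i - 1, j - 1) v * (varx * vary :: 'k polR)"
      by (simp add: varx_times_vary mult_single)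
    then show ?thesis by (metis ideal2_mult_left ideal2_right)
  next
    case 2
    then have "Poly_Mapping.single (i, j) v = Poly_Mapping.single (i - 1, 0) v * (varx + vary :: 'k polR)
        + (- Poly_Mapping.single (i - 2, 0) v) * (varx * vary)"
      by (simp add: varx_times_vary varx_def vary_def mult_single distrib_left numeral_2_eq_2 Suc_diff_Suc)
    then show ?thesis
      by (metis ideal2_add ideal2_mult_left ideal2_left ideal2_right)
  next
    case 3
    then have "Poly_Mapping.single (i, j) v = Poly_Mapping.single (0, j - 1) v * (varx + vary :: 'k polR)
        + (- Poly_Mapping.single (0, j - 2) v) * (varx * vary)"
      by (simp add: varx_times_vary varx_def vary_def mult_single distrib_left numeral_2_eq_2 Suc_diff_Suc)
    then show ?thesis
      by (metis ideal2_add ideal2_mult_left ideal2_left ideal2_right)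
  qed
qed

lemma AnnR_FB_eq_ideal2: "AnnR (FB :: 'k::comm_ring_1 dpR) = ideal2 (varx + vary) (varx * vary)"
proof
  show "ideal2 (varx + vary) (varx * vary) \<subseteq> AnnR (FB :: 'k dpR)"
  proof
    fix f :: "'k polR"
    assume "f \<in> ideal2 (varx + vary) (varx * vary)"
    then obtain a b where f: "f = a * (varx + vary) + b * (varx * vary)" by (auto simp: ideal2_def)
    show "f \<in> AnnR FB"
      unfolding AnnR_FB_iff f varx_times_vary distrib_left
      by (simp add: lookup_add varx_def vary_def lookup_mult_single_pair)
  qed
next
  show "AnnR (FB :: 'k dpR) \<subseteq> ideal2 (varx + vary) (varx * vary)"
  proof
    fix f :: "'k polR"
    assume "f \<in> AnnR FB"
    then have f: "coef f (0,0) = 0" "coef f (1,0) = coef f (0,1)" by (simp_all add: AnnR_FB_iff)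
    define c where "c = coef f (1,0)"
    define g where "g = f - Poly_Mapping.single (1,0) c - Poly_Mapping.single (0,1) c"
    have f_eq: "f = g + Poly_Mapping.single (0,0) c * (varx + vary)"
      by (simp add: g_def varx_def vary_def mult_single distrib_left)
    have g_high: "fst m + snd m \<ge> 2" if "m \<in> Poly_Mapping.keys g" for m
    proof (rule ccontr)
      assume "\<not> fst m + snd m \<ge> 2"
      then have "m = (0,0) \<or> m = (1,0) \<or> m = (0,1)" by (cases m) auto
      with f that show False by (auto simp: g_def c_def in_keys_iff lookup_minus lookup_single)
    qed
    have "g = (\<Sum>m\<in>Poly_Mapping.keys g. Poly_Mapping.single m (coef g m))"
      by (rule poly_mapping_eqI) (simp add: lookup_sum lookup_single when_def in_keys_iff)
    also have "\<dots> \<in> ideal2 (varx + vary) (varx * vary)"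
      using g_high by (intro ideal2_sum) (metis prod.collapse single_in_ideal2_varx_vary)
    finally show "f \<in> ideal2 (varx + vary) (varx * vary)"
      by (subst f_eq) (intro ideal2_add ideal2_mult_left ideal2_left)
  qed
qed

lemma I1_eq_UNIV: "I1 = (UNIV :: 'k::comm_ring_1 polR set)"
proof -
  have "f * g \<in> AnnR FB" if "g \<in> AnnR G1" for f g :: "'k polR"
    using that AnnR_G1_subset_AnnR_FB ideal2_mult_left unfolding AnnR_FB_eq_ideal2 by blast
  then show ?thesis by (auto simp: I1_def I0_def colon_def)
qed

lemma I2_eq_UNIV: "I2 = (UNIV :: 'k::comm_ring_1 polR set)"
  by (simp add: I2_def I1_eq_UNIV colon_def)

lemma G1_not_contraction_of_FB: "G1 \<notin> {contractR f (FB :: 'k::comm_ring_1 dpR) | f. True}"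
proof
  assume "G1 \<in> {contractR f (FB :: 'k dpR) | f. True}"
  then obtain f :: "'k polR" where "G1 = contractR f FB" by blast
  then have "coef (G1 :: 'k dpR) (0,2) = coef (contractR f FB) (0,2)" by simp
  then show False by (simp add: lookup_G1 lookup_contractR_FB)
qed

lemma t_cube_dvd_iff:
  "([:0,0,0,1:] :: 'a::comm_semiring_1 poly) dvd p \<longleftrightarrow> coeff p 0 = 0 \<and> coeff p 1 = 0 \<and> coeff p 2 = 0"
proof -
  have "([:0,0,0,1:] :: 'a poly) = monom 1 3"
    by (simp add: monom_Suc numeral_3_eq_3 monom_0 one_pCons)
  then show ?thesis
    by (auto simp: monom_1_dvd_iff' less_Suc_eq numeral_3_eq_3 numeral_2_eq_2)
qed

lemma lookup_tpoly: "coef (tpoly p) (a, b, c) = (if a = 0 \<and> b = 0 then coeff p c else 0)"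
proof -
  have "coef (tpoly p) (a, b, c) =
      (\<Sum>i\<le>degree p. if i = c then (if a = 0 \<and> b = 0 then coeff p i else 0) else 0)"
    unfolding tpoly_def lookup_sum by (rule sum.cong) (auto simp: lookup_single when_def)
  then show ?thesis by (simp add: coeff_eq_0)
qed

lemma tpoly_0 [simp]: "tpoly 0 = 0"
  by (simp add: tpoly_def)

lemma tpoly_var: "tpoly [:0,1:] = (Poly_Mapping.single (0,0,1) 1 :: 'k::comm_ring_1 polS)"
proof (rule poly_mapping_eqI)
  fix k :: "nat \<times> nat \<times> nat"
  show "coef (tpoly [:0,1:]) k = coef (Poly_Mapping.single (0,0,1) (1::'k)) k"
    by (cases k) (auto simp: lookup_tpoly lookup_single when_def coeff_pCons split: nat.splits)
qed

lemma lookup_tzero: "coef (tzero s) (a, b) = coef s (a, b, 0)"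
proof -
  have "coef (case m of (a', b', c') \<Rightarrow>
      if c' = 0 then Poly_Mapping.single (a', b') (coef s m) else 0) (a, b)
    = (if m = (a, b, 0) then coef s m else 0)" for m :: "nat \<times> nat \<times> nat"
    by (cases m) (auto simp: lookup_single when_def)
  then have "coef (tzero s) (a, b) = (\<Sum>m\<in>Poly_Mapping.keys s. if m = (a, b, 0) then coef s m else 0)"
    unfolding tzero_def lookup_sum by presburger
  then show ?thesis by (simp add: in_keys_iff)
qed

lemma tpoly_in_AnnS_Fbig: "[:0,0,0,1:] dvd p \<Longrightarrow> tpoly p \<in> AnnS (Fbig :: 'k::comm_ring_1 dpS)"
  by (simp add: AnnS_Fbig_iff t_cube_dvd_iff lookup_tpoly)

lemma tzero_in_AnnR_FB: "s \<in> AnnS (Fbig :: 'k::comm_ring_1 dpS) \<Longrightarrow> tzero s \<in> AnnR FB"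
  by (simp add: AnnS_Fbig_iff AnnR_FB_iff lookup_tzero)

lemma tzero_surjective_modulo_AnnR_FB: "\<exists>s. r - tzero s \<in> AnnR (FB :: 'k::comm_ring_1 dpR)"
proof
  let ?s = "Poly_Mapping.single (0,0,0) (coef r (0,0)) + Poly_Mapping.single (1,0,0) (coef r (1,0))
     + Poly_Mapping.single (0,1,0) (coef r (0,1)) :: 'k polS"
  show "r - tzero ?s \<in> AnnR FB"
    by (simp add: AnnR_FB_iff lookup_minus lookup_tzero lookup_add lookup_single)
qed

lemma tzero_in_AnnR_FB_iff:
  "tzero s \<in> AnnR (FB :: 'k::comm_ring_1 dpR) \<longleftrightarrow> (\<exists>u. s - tpoly [:0,1:] * u \<in> AnnS (Fbig :: 'k dpS))"
proof
  assume "tzero s \<in> AnnR FB"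
  then have s: "coef s (0,0,0) = 0" "coef s (1,0,0) = coef s (0,1,0)"
    by (simp_all add: AnnR_FB_iff lookup_tzero)
  define u :: "'k polS" where "u =
      Poly_Mapping.single (0,0,0) (coef s (0,0,1) - coef s (1,0,0))
    + Poly_Mapping.single (1,0,0) (coef s (1,0,1) - coef s (0,1,1) - coef s (2,0,0) + coef s (0,2,0))
    + Poly_Mapping.single (0,0,1) (coef s (0,0,2) - coef s (0,1,1) - coef s (2,0,0) + coef s (1,1,0))
    + Poly_Mapping.single (1,0,1) (coef s (1,0,2) - coef s (0,1,2) + coef s (0,2,1) - coef s (2,0,1)
        + coef s (2,1,0) - coef s (1,2,0))"
  txt \<open>Multiplication by \<open>t\<close> leaves the coefficients of \<open>t\<close>-degree 0 unchanged, so the two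
    conditions on those are exactly the hypothesis; \<open>u\<close> is chosen to fix the other four.\<close>
  have "s - tpoly [:0,1:] * u \<in> AnnS Fbig"
    unfolding AnnS_Fbig_iff tpoly_var mult.commute[of "Poly_Mapping.single (0,0,1) 1"]
    using s by (simp add: u_def lookup_minus lookup_mult_single_triple lookup_add lookup_single algebra_simps)
  then show "\<exists>u. s - tpoly [:0,1:] * u \<in> AnnS (Fbig :: 'k dpS)" ..
next
  assume "\<exists>u. s - tpoly [:0,1:] * u \<in> AnnS (Fbig :: 'k dpS)"
  then obtain u where "s - u * Poly_Mapping.single (0,0,1) 1 \<in> AnnS (Fbig :: 'k dpS)"
    by (auto simp: tpoly_var mult.commute)
  then show "tzero s \<in> AnnR FB"
    by (simp add: AnnS_Fbig_iff AnnR_FB_iff lookup_tzero lookup_minus lookup_mult_single_triple)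
qed

definition varxS :: "'k::comm_ring_1 polS" where "varxS = Poly_Mapping.single (1,0,0) 1"

lemma one_neq_varxS: "(1 :: 'k::comm_ring_1 polS) \<noteq> varxS"
proof
  assume "(1 :: 'k polS) = varxS"
  then have "coef (1 :: 'k polS) (1,0,0) = coef (varxS :: 'k polS) (1,0,0)" by simp
  then show False by (simp add: varxS_def lookup_one zero_prod_def)
qed

lemma free_over_A_pair_basis:
  fixes J :: "'k::field polS set" and a b :: "'k polS"
  assumes "a \<noteq> b"
    and spanning: "\<And>s. \<exists>p q. s - (tpoly p * a + tpoly q * b) \<in> J"
    and independent: "\<And>p q. tpoly p * a + tpoly q * b \<in> J \<Longrightarrow> [:0,0,0,1:] dvd p \<and> [:0,0,0,1:] dvd q"
  shows "free_over_A J"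
proof -
  have pair_sum: "(\<Sum>e\<in>{e \<in> {a, b}. c e \<noteq> 0}. tpoly (c e) * e) = tpoly (c a) * a + tpoly (c b) * b"
    for c :: "'k polS \<Rightarrow> 'k poly"
  proof -
    have "(\<Sum>e\<in>{e \<in> {a, b}. c e \<noteq> 0}. tpoly (c e) * e) = (\<Sum>e\<in>{a, b}. tpoly (c e) * e)"
      by (rule sum.mono_neutral_left) auto
    with \<open>a \<noteq> b\<close> show ?thesis by simp
  qed
  show ?thesis
    unfolding free_over_A_def
  proof (intro exI[of _ "{a, b}"] conjI allI impI ballI)
    fix s
    obtain p q where "s - (tpoly p * a + tpoly q * b) \<in> J" using spanning by blast
    moreover have "(if a = a then p else q) = p" and "(if b = a then p else q) = q"
      using \<open>a \<noteq> b\<close> by auto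
    ultimately show "\<exists>c. finite {e \<in> {a, b}. c e \<noteq> 0} \<and>
        s - (\<Sum>e\<in>{e \<in> {a, b}. c e \<noteq> 0}. tpoly (c e) * e) \<in> J"
      unfolding pair_sum by (intro exI[of _ "\<lambda>e. if e = a then p else q"]) simp
  next
    fix c e
    assume "(\<Sum>e\<in>{e \<in> {a, b}. c e \<noteq> 0}. tpoly (c e) * e) \<in> J" and "e \<in> {a, b}"
    then show "[:0,0,0,1:] dvd c e"
      unfolding pair_sum using independent by auto
  qed
qed

lemma AnnS_Fbig_spanned_by_1_varxS:
  "\<exists>p q. s - (tpoly p + tpoly q * varxS) \<in> AnnS (Fbig :: 'k::comm_ring_1 dpS)"
proof -
  define p where "p = [:coef s (0,0,0), coef s (0,0,1) - coef s (0,1,0),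
      coef s (0,0,2) - coef s (0,1,1) - coef s (2,0,0) + coef s (1,1,0):]"
  define q where "q = [:coef s (1,0,0) - coef s (0,1,0),
      coef s (1,0,1) - coef s (0,1,1) - coef s (2,0,0) + coef s (0,2,0),
      coef s (1,0,2) - coef s (0,1,2) + coef s (0,2,1) - coef s (2,0,1) + coef s (2,1,0) - coef s (1,2,0):]"
  have "s - (tpoly p + tpoly q * varxS) \<in> AnnS Fbig"
    unfolding AnnS_Fbig_iff varxS_def
    by (simp add: lookup_minus lookup_add lookup_mult_single_triple lookup_tpoly)
      (simp add: p_def q_def numeral_2_eq_2 algebra_simps)
  then show ?thesis by blast
qed

lemma AnnS_Fbig_independent_1_varxS:
  assumes "tpoly p + tpoly q * varxS \<in> AnnS (Fbig :: 'k::comm_ring_1 dpS)"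
  shows "[:0,0,0,1:] dvd p \<and> [:0,0,0,1:] dvd q"
  using assms
  by (auto simp: AnnS_Fbig_iff t_cube_dvd_iff varxS_def lookup_add lookup_mult_single_triple
      lookup_tpoly)

lemma free_over_A_AnnS_Fbig: "free_over_A (AnnS (Fbig :: 'k::field dpS))"
  using one_neq_varxS AnnS_Fbig_spanned_by_1_varxS AnnS_Fbig_independent_1_varxS
  by (intro free_over_A_pair_basis[of 1 varxS]) simp_all

lemma free_extension_AnnS_Fbig: "free_extension (AnnS (Fbig :: 'k::field dpS)) (AnnR FB)"
  unfolding free_extension_def
  by (intro conjI allI impI ballI tpoly_in_AnnS_Fbig tzero_in_AnnR_FB free_over_A_AnnS_Fbig
      tzero_surjective_modulo_AnnR_FB tzero_in_AnnR_FB_iff)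

theorem mainTheorem6:
  shows "AnnR (G1 :: 'k::field dpR) \<subseteq> AnnR FB
     \<and> I1 = (UNIV :: 'k polR set) \<and> I2 = (UNIV :: 'k polR set)
     \<and> \<not> ({contractR f G1 | f. f \<in> I1} \<subseteq> {contractR f (FB :: 'k dpR) | f. True})
     \<and> AnnR (FB :: 'k dpR) = ideal2 (varx + vary) (varx * vary)
     \<and> free_extension (AnnS (Fbig :: 'k dpS)) (AnnR FB)"
proof (intro conjI AnnR_G1_subset_AnnR_FB I1_eq_UNIV I2_eq_UNIV AnnR_FB_eq_ideal2
    free_extension_AnnS_Fbig)
  have "G1 \<in> {contractR f (G1 :: 'k dpR) | f. f \<in> I1}"
    using contractR_one[of G1, symmetric] by (auto simp: I1_eq_UNIV)
  with G1_not_contraction_of_FB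
  show "\<not> ({contractR f G1 | f. f \<in> I1} \<subseteq> {contractR f (FB :: 'k dpR) | f. True})"
    by blast
qed

end
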